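(* Let $\{F_y\}_{y\in P}$ be a family of $d$-IEMs on $\mathbb{S}^1$ with fixed combinatorics, elemental subintervals $J_\alpha(y)$ and translation amounts $\omega_\alpha(y)$ depending $C^1$ on $y$, let $f$ be a smooth $1$-periodic function, and $T_\varepsilon(x,y)=(F_y(x),\,y+\varepsilon f(F_y(x)))$. Let $X^*=\{(x_k^*,y_0^* )\}_{k=0}^{q-1}$, $x_k^*=F_{y_0^*}^k(x_0^* )$, be a $q$-periodic orbit of $T_0$ with $y_0^*$ in the interior of $P$ and each $x_k^*$ in the interior of an elemental subinterval $J_{\alpha_k}(y_0^* )$. Set $$M(X^* )=\Big(\sum_{k=0}^{q-1}f'(x_k^* )\Big)\Big(\sum_{k=0}^{q-1}\omega'_{\alpha_k}(y_0^* )\Big).$$ (i) If $\sum_{k=0}^{q-1}f(x_k^* )=0$ and $M(X^* )\neq 0$, then there exist $\varepsilon_0>0$ and a neighborhood $U$ of $(x_0^*,y_0^* )$ such that for every $0<|\varepsilon|<\varepsilon_0$ the map $T_\varepsilon$ has exactly one point $(x_0^\varepsilon,y_0^\varepsilon)\in U$ with $T_\varepsilon^q(x_0^\varepsilon,y_0^\varepsilon)=(x_0^\varepsilon,y_0^\varepsilon)$; it depends continuously on $\varepsilon$ and tends to $(x_0^*,y_0^* )$ as $\varepsilon\to0$. (ii) If $\sum_{k=0}^{q-1}f(x_k^* )\neq 0$, then there exist $\varepsilon_0>0$ and a neighborhood $U$ of $(x_0^*,y_0^* )$ such that for $0<|\varepsilon|<\varepsilon_0$ no point of $U$ satisfies 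$T_\varepsilon^q(p)=p$.
   Context: A $d$-IEM on $\mathbb{S}^1=\mathbb{R}/\mathbb{Z}$ (identified with $[0,1)$) translates each of $d$ consecutive left-closed right-open elemental subintervals $J_\alpha$; here $F_y(x)=x+\omega_\alpha(y)$ for $x\in J_\alpha(y)$, with the endpoints of the $J_\alpha(y)$ and $\omega_\alpha(y)$ of class $C^1$ in $y\in P$, $P$ an open interval. *)

theory Defs
  imports "HOL-Analysis.Analysis"
begin

text \<open>Circle S^1 = R/Z represented by [0,1).  A d-IEM is given by endpoint functions
  a 0 y < a 1 y < ... < a (d-1) y < a 0 y + 1 (a lift of the cyclically ordered
  endpoints) and translation amounts om alpha y.\<close>

definition upper_end :: "(nat \<Rightarrow> real \<Rightarrow> real) \<Rightarrow> nat \<Rightarrow> nat \<Rightarrow> real \<Rightarrow> real" where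
  "upper_end a d \<alpha> y = (if Suc \<alpha> = d then a 0 y + 1 else a (Suc \<alpha>) y)"

definition elem_J :: "(nat \<Rightarrow> real \<Rightarrow> real) \<Rightarrow> nat \<Rightarrow> nat \<Rightarrow> real \<Rightarrow> real set" where
  "elem_J a d \<alpha> y = {x \<in> {0..<1}. \<exists>n::int. a \<alpha> y \<le> x + of_int n \<and> x + of_int n < upper_end a d \<alpha> y}"

definition elem_J_int :: "(nat \<Rightarrow> real \<Rightarrow> real) \<Rightarrow> nat \<Rightarrow> nat \<Rightarrow> real \<Rightarrow> real set" where
  "elem_J_int a d \<alpha> y = {x \<in> {0..<1}. \<exists>n::int. a \<alpha> y < x + of_int n \<and> x + of_int n < upper_end a d \<alpha> y}"

definition elem_idx :: "(nat \<Rightarrow> real \<Rightarrow> real) \<Rightarrow> nat \<Rightarrow> real \<Rightarrow> real \<Rightarrow> nat" where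
  "elem_idx a d y x = (THE \<alpha>. \<alpha> < d \<and> x \<in> elem_J a d \<alpha> y)"

definition IEM :: "(nat \<Rightarrow> real \<Rightarrow> real) \<Rightarrow> (nat \<Rightarrow> real \<Rightarrow> real) \<Rightarrow> nat \<Rightarrow> real \<Rightarrow> real \<Rightarrow> real" where
  "IEM a om d y x = frac (x + om (elem_idx a d y x) y)"

definition Tmap :: "(nat \<Rightarrow> real \<Rightarrow> real) \<Rightarrow> (nat \<Rightarrow> real \<Rightarrow> real) \<Rightarrow> nat \<Rightarrow> (real \<Rightarrow> real)
    \<Rightarrow> real \<Rightarrow> real \<times> real \<Rightarrow> real \<times> real" where
  "Tmap a om d f \<epsilon> p = (IEM a om d (snd p) (fst p),
                         snd p + \<epsilon> * f (IEM a om d (snd p) (fst p)))"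

definition IEM_family :: "(nat \<Rightarrow> real \<Rightarrow> real) \<Rightarrow> (nat \<Rightarrow> real \<Rightarrow> real) \<Rightarrow> nat \<Rightarrow> real set \<Rightarrow> bool" where
  "IEM_family a om d P \<longleftrightarrow>
     d \<ge> 1 \<and>
     (\<forall>\<alpha><d. a \<alpha> C1_differentiable_on P \<and> om \<alpha> C1_differentiable_on P) \<and>
     (\<forall>y\<in>P. (\<forall>\<alpha>. Suc \<alpha> < d \<longrightarrow> a \<alpha> y < a (Suc \<alpha>) y) \<and> a (d - 1) y < a 0 y + 1 \<and>
             bij_betw (IEM a om d y) {0..<1} {0..<1})"

definition smooth_fun :: "(real \<Rightarrow> real) \<Rightarrow> bool" where
  "smooth_fun f \<longleftrightarrow> (\<forall>k x. ((deriv ^^ k) f) differentiable (at x))"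

definition cyl_nbhd :: "real set \<Rightarrow> real \<times> real \<Rightarrow> (real \<times> real) set \<Rightarrow> bool" where
  "cyl_nbhd P p U \<longleftrightarrow> U \<subseteq> {0..<1} \<times> P \<and>
     (\<exists>V. open V \<and> p \<in> V \<and> (\<lambda>(x, y). (frac x, y)) ` V \<subseteq> U)"

end

theory Submission
  imports Defs "HOL-Library.Periodic_Fun"
begin

text \<open>
  Near the periodic orbit every point that matters stays in the interior of the elemental
  interval of the corresponding orbit point, so \<open>T\<^sub>\<epsilon>\<^sup>q\<close> has an explicit smooth lift:
  at step \<open>k\<close> one always translates by \<open>\<omega>\<^sub>\<alpha>\<^sub>k(y)\<close>.  In lifted coordinates the \<open>q\<close>-th iterate
  moves \<open>(x, y)\<close> by \<open>(m + x_drift, \<epsilon> \<cdot> y_drift)\<close>, where \<open>m\<close> is the winding of the unperturbed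
  orbit, so for \<open>\<epsilon> \<noteq> 0\<close> the \<open>q\<close>-periodic points near \<open>(x\<^sub>0\<^sup>*, y\<^sub>0\<^sup>*)\<close> are exactly the common
  zeros of \<open>x_drift\<close> and \<open>y_drift\<close>.  The function \<open>x_drift\<close> vanishes on the whole line
  \<open>\<epsilon> = 0, y = y\<^sub>0\<^sup>*\<close>, and at the orbit \<open>y_drift = \<Sum>f(x\<^sub>k\<^sup>*)\<close>.  If this sum is nonzero,
  \<open>y_drift\<close> has no zeros nearby, which is (ii).
  If it vanishes, the Jacobian of \<open>(x_drift, y_drift, \<epsilon>)\<close> with respect to \<open>(x, y, \<epsilon>)\<close> at the
  orbit has determinant \<open>-M(X\<^sup>*)\<close>, and the inverse function theorem turns the common zero set
  into a continuous graph \<open>\<epsilon> \<mapsto> X(\<epsilon>)\<close> through \<open>(x\<^sub>0\<^sup>*, y\<^sub>0\<^sup>*)\<close>, which is (i).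
\<close>

lemma frac_eq_frac_iff: "frac x = frac y \<longleftrightarrow> x - y \<in> \<int>"
proof
  assume "frac x = frac y"
  then obtain n where "x = y + of_int n" by (rule frac_eqE)
  then show "x - y \<in> \<int>" by simp
next
  assume "x - y \<in> \<int>"
  then show "frac x = frac y" using frac_add_int_right[of "x - y" y] by simp
qed

lemma isCont_tendsto_nhds: "isCont g p \<Longrightarrow> (g \<longlongrightarrow> g p) (nhds p)"
  by (simp add: isCont_def tendsto_at_iff_tendsto_nhds)

lemma periodic_fun_simple'_frac:
  fixes f :: "real \<Rightarrow> 'b"
  assumes "periodic_fun_simple' f"
  shows "f (frac x) = f x"
proof -
  interpret periodic_fun_simple' f by fact
  show ?thesis using plus_of_int[of "frac x" "\<lfloor>x\<rfloor>"] by (simp add: frac_def)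
qed

lemma periodic_fun_simple'_deriv:
  fixes f :: "real \<Rightarrow> real"
  assumes "periodic_fun_simple' f"
  shows "periodic_fun_simple' (deriv f)"
proof
  have "(\<lambda>t. f (t + 1)) = f" using periodic_fun_simple'.plus_period[OF assms] by simp
  then show "deriv f (x + 1) = deriv f x" for x
    by (simp add: deriv_def DERIV_shift)
qed

lemma smooth_fun_imp_C1_differentiable:
  assumes smooth: "smooth_fun f"
  shows "f C1_differentiable_on UNIV"
proof -
  have "(deriv ^^ 0) f differentiable at x" "(deriv ^^ 1) f differentiable at x" for x
    using smooth unfolding smooth_fun_def by blast+
  then have diff: "f differentiable at x" "deriv f differentiable at x" for x
    by simp_all
  then have "vector_derivative f (at x) = deriv f x" for x
    using DERIV_deriv_iff_real_differentiable[of f x]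
    by (simp add: has_real_derivative_iff_has_vector_derivative vector_derivative_at)
  moreover have "continuous_on UNIV (deriv f)"
    using diff by (simp add: continuous_at_imp_continuous_on differentiable_imp_continuous_within)
  ultimately show ?thesis
    using diff by (simp add: C1_differentiable_on_eq)
qed

section \<open>Continuously differentiable functions of several variables\<close>

definition C1_on :: "'a::real_inner set \<Rightarrow> ('a \<Rightarrow> real) \<Rightarrow> bool" where
  "C1_on W g \<longleftrightarrow> (\<exists>D. continuous_on W D \<and> (\<forall>v\<in>W. (g has_derivative (\<lambda>h. D v \<bullet> h)) (at v)))"

lemma C1_on_imp_continuous_on: "C1_on W g \<Longrightarrow> continuous_on W g"
  unfolding C1_on_def by (metis continuous_at_imp_continuous_on has_derivative_continuous)

lemma C1_on_const: "C1_on W (\<lambda>v. c)"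
  unfolding C1_on_def
  by (rule exI[of _ "\<lambda>v. 0"]) (auto intro!: has_derivative_eq_rhs[OF has_derivative_const])

lemma C1_on_inner: "C1_on W (\<lambda>v. c \<bullet> v)"
  unfolding C1_on_def by (rule exI[of _ "\<lambda>v. c"]) (auto intro: derivative_eq_intros)

lemma C1_on_add:
  assumes "C1_on W g1" "C1_on W g2"
  shows "C1_on W (\<lambda>v. g1 v + g2 v)"
proof -
  obtain D1 D2 where "continuous_on W D1" "\<forall>v\<in>W. (g1 has_derivative (\<lambda>h. D1 v \<bullet> h)) (at v)"
    "continuous_on W D2" "\<forall>v\<in>W. (g2 has_derivative (\<lambda>h. D2 v \<bullet> h)) (at v)"
    using assms unfolding C1_on_def by blast
  then show ?thesis unfolding C1_on_def
    by (intro exI[of _ "\<lambda>v. D1 v + D2 v"])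
      (auto intro!: continuous_intros derivative_eq_intros simp: inner_add_left)
qed

lemma C1_on_diff:
  assumes "C1_on W g1" "C1_on W g2"
  shows "C1_on W (\<lambda>v. g1 v - g2 v)"
proof -
  obtain D1 D2 where "continuous_on W D1" "\<forall>v\<in>W. (g1 has_derivative (\<lambda>h. D1 v \<bullet> h)) (at v)"
    "continuous_on W D2" "\<forall>v\<in>W. (g2 has_derivative (\<lambda>h. D2 v \<bullet> h)) (at v)"
    using assms unfolding C1_on_def by blast
  then show ?thesis unfolding C1_on_def
    by (intro exI[of _ "\<lambda>v. D1 v - D2 v"])
      (auto intro!: continuous_intros derivative_eq_intros simp: inner_diff_left)
qed

lemma C1_on_mult:
  assumes "C1_on W g1" "C1_on W g2"
  shows "C1_on W (\<lambda>v. g1 v * g2 v)"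
proof -
  obtain D1 D2 where "continuous_on W D1" "\<forall>v\<in>W. (g1 has_derivative (\<lambda>h. D1 v \<bullet> h)) (at v)"
    "continuous_on W D2" "\<forall>v\<in>W. (g2 has_derivative (\<lambda>h. D2 v \<bullet> h)) (at v)"
    using assms unfolding C1_on_def by blast
  moreover have "continuous_on W g1" "continuous_on W g2"
    using assms by (auto intro: C1_on_imp_continuous_on)
  ultimately show ?thesis unfolding C1_on_def
    by (intro exI[of _ "\<lambda>v. g1 v *\<^sub>R D2 v + g2 v *\<^sub>R D1 v"])
      (auto intro!: continuous_intros derivative_eq_intros simp: inner_add_left algebra_simps)
qed

lemma C1_on_sum: "(\<And>k. k < (n::nat) \<Longrightarrow> C1_on W (g k)) \<Longrightarrow> C1_on W (\<lambda>v. \<Sum>k<n. g k v)"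
  by (induction n) (auto intro: C1_on_add C1_on_const)

lemma C1_on_compose:
  assumes g: "C1_on W g" and \<phi>: "\<phi> C1_differentiable_on S" and "g ` W \<subseteq> S"
  shows "C1_on W (\<lambda>v. \<phi> (g v))"
proof -
  obtain D where D: "continuous_on W D" "\<And>v. v \<in> W \<Longrightarrow> (g has_derivative (\<lambda>h. D v \<bullet> h)) (at v)"
    using g unfolding C1_on_def by blast
  obtain \<phi>' where \<phi>': "\<And>t. t \<in> S \<Longrightarrow> (\<phi> has_real_derivative \<phi>' t) (at t)" "continuous_on S \<phi>'"
    using \<phi> unfolding C1_differentiable_on_def has_real_derivative_iff_has_vector_derivative by blast
  have cont: "continuous_on W (\<lambda>v. \<phi>' (g v))"
    using continuous_on_compose2[OF \<phi>'(2) C1_on_imp_continuous_on[OF g] assms(3)] .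
  have der: "((\<lambda>v. \<phi> (g v)) has_derivative (\<lambda>h. (\<phi>' (g v) *\<^sub>R D v) \<bullet> h)) (at v)" if "v \<in> W" for v
  proof -
    have "(\<phi> has_derivative (\<lambda>t. \<phi>' (g v) * t)) (at (g v))"
      using \<phi>'(1) that assms(3) by (auto simp: has_field_derivative_def)
    from diff_chain_at[OF D(2)[OF that] this]
    show ?thesis unfolding o_def by (rule has_derivative_eq_rhs) (simp add: fun_eq_iff)
  qed
  show ?thesis
    unfolding C1_on_def
    by (intro exI[of _ "\<lambda>v. \<phi>' (g v) *\<^sub>R D v"] conjI ballI continuous_intros cont D(1) der)
qed

lemma has_derivative_inner_directional:
  assumes "(g has_derivative (\<lambda>h. D \<bullet> h)) (at v)"
  shows "((\<lambda>t. g (v + t *\<^sub>R u)) has_real_derivative D \<bullet> u) (at 0)"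
proof -
  have "((\<lambda>t. v + t *\<^sub>R u) has_derivative (\<lambda>t. t *\<^sub>R u)) (at 0)"
    by (auto intro!: derivative_eq_intros)
  moreover have "(g has_derivative (\<lambda>h. D \<bullet> h)) (at (v + 0 *\<^sub>R u))"
    using assms by simp
  ultimately have "((\<lambda>t. g (v + t *\<^sub>R u)) has_derivative (\<lambda>t. D \<bullet> (t *\<^sub>R u))) (at 0)"
    by (rule diff_chain_at[unfolded o_def])
  then show ?thesis
    unfolding has_field_derivative_def by (rule has_derivative_eq_rhs) (simp add: fun_eq_iff)
qed

lemma continuous_on_Blinfun:
  fixes F :: "'c::t2_space \<Rightarrow> 'a::euclidean_space \<Rightarrow> 'b::euclidean_space"
  assumes "\<And>v. bounded_linear (F v)" and "\<And>h. continuous_on W (\<lambda>v. F v h)"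
  shows "continuous_on W (\<lambda>v. Blinfun (F v))"
proof -
  have "Blinfun (F v) = blinfun_of_matrix (\<lambda>i j. F v j \<bullet> i)" for v
    using blinfun_of_matrix_works[of "Blinfun (F v)"]
    unfolding bounded_linear_Blinfun_apply[OF assms(1)] by (rule sym)
  then show ?thesis
    using assms(2) by (simp add: continuous_on_blinfun_of_matrix continuous_on_inner continuous_on_const)
qed

lemma inverse_function_theorem_inj:
  fixes f :: "'a::euclidean_space \<Rightarrow> 'a" and f' :: "'a \<Rightarrow> 'a \<Rightarrow>\<^sub>L 'a"
  assumes "open U" "\<And>x. x \<in> U \<Longrightarrow> (f has_derivative blinfun_apply (f' x)) (at x)"
    and "continuous_on U f'" "x0 \<in> U" and inj: "inj (blinfun_apply (f' x0))"
  obtains U' V g where "open U'" "x0 \<in> U'" "open V" "homeomorphism U' V f g"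
proof -
  obtain g where g: "linear g" "g \<circ> blinfun_apply (f' x0) = id"
    using linear_injective_left_inverse[OF _ inj] blinfun.bounded_linear_right bounded_linear.linear
    by blast
  have "Blinfun g o\<^sub>L f' x0 = id_blinfun"
    using g by (intro blinfun_eqI) (simp add: bounded_linear_Blinfun_apply linear_conv_bounded_linear
        pointfree_idE)
  from inverse_function_theorem[OF assms(1-4) this] show ?thesis
    by (metis that)
qed

section \<open>Elemental intervals\<close>

lemma IEM_family_endpoint_mono:
  assumes fam: "IEM_family a om d P" and y: "y \<in> P" and "\<alpha> \<le> \<beta>" "\<beta> < d"
  shows "a \<alpha> y \<le> a \<beta> y"
proof (rule lift_Suc_mono_le_ivl[where N = "{..<d - 1}"])
  show "a n y \<le> a (Suc n) y" if "n \<in> {..<d - 1}" for n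
    using fam y that unfolding IEM_family_def by (auto intro: less_imp_le)
qed (use assms in auto)

lemma IEM_family_upper_end_le_endpoint:
  assumes fam: "IEM_family a om d P" and y: "y \<in> P" and "\<alpha> < \<beta>" "\<beta> < d"
  shows "upper_end a d \<alpha> y \<le> a \<beta> y"
  using IEM_family_endpoint_mono[OF fam y, of "Suc \<alpha>" \<beta>] assms by (simp add: upper_end_def)

lemma IEM_family_upper_end_le:
  assumes fam: "IEM_family a om d P" and y: "y \<in> P" and "\<alpha> < d"
  shows "upper_end a d \<alpha> y \<le> a 0 y + 1"
proof (cases "Suc \<alpha> = d")
  case False
  then have "a (Suc \<alpha>) y \<le> a (d - 1) y"
    using IEM_family_endpoint_mono[OF fam y, of "Suc \<alpha>" "d - 1"] assms by simp
  moreover have "a (d - 1) y < a 0 y + 1" using fam y unfolding IEM_family_def by blast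
  ultimately show ?thesis using False by (simp add: upper_end_def)
qed (simp add: upper_end_def)

lemma elem_J_unique:
  assumes fam: "IEM_family a om d P" and y: "y \<in> P" and "\<alpha> < d" "\<beta> < d"
    and "x \<in> elem_J a d \<alpha> y" "x \<in> elem_J a d \<beta> y"
  shows "\<alpha> = \<beta>"
proof -
  obtain n :: int where n: "a \<alpha> y \<le> x + n" "x + n < upper_end a d \<alpha> y"
    using assms(5) unfolding elem_J_def by auto
  obtain m :: int where m: "a \<beta> y \<le> x + m" "x + m < upper_end a d \<beta> y"
    using assms(6) unfolding elem_J_def by auto
  have "a 0 y \<le> a \<alpha> y" "a 0 y \<le> a \<beta> y"
    using IEM_family_endpoint_mono[OF fam y] assms(3,4) by auto
  moreover have "upper_end a d \<alpha> y \<le> a 0 y + 1" "upper_end a d \<beta> y \<le> a 0 y + 1"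
    using IEM_family_upper_end_le[OF fam y] assms(3,4) by auto
  ultimately have "n = m" using n m by linarith
  then show ?thesis
    using IEM_family_upper_end_le_endpoint[OF fam y, of \<alpha> \<beta>]
      IEM_family_upper_end_le_endpoint[OF fam y, of \<beta> \<alpha>] assms(3,4) n m
    by (cases \<alpha> \<beta> rule: linorder_cases) auto
qed

lemma elem_J_exists:
  assumes fam: "IEM_family a om d P" and y: "y \<in> P" and x: "x \<in> {0..<1}"
  obtains \<alpha> where "\<alpha> < d" "x \<in> elem_J a d \<alpha> y"
proof -
  define z where "z = x + of_int \<lceil>a 0 y - x\<rceil>"
  have z: "a 0 y \<le> z" "z < a 0 y + 1" unfolding z_def by linarith+
  have "d \<ge> 1" using fam unfolding IEM_family_def by blast
  define \<alpha> where "\<alpha> = Max {\<beta>. \<beta> < d \<and> a \<beta> y \<le> z}"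
  have fin: "finite {\<beta>. \<beta> < d \<and> a \<beta> y \<le> z}" by simp
  have "0 \<in> {\<beta>. \<beta> < d \<and> a \<beta> y \<le> z}" using \<open>d \<ge> 1\<close> z by auto
  then have "\<alpha> \<in> {\<beta>. \<beta> < d \<and> a \<beta> y \<le> z}"
    unfolding \<alpha>_def using Max_in[OF fin] by blast
  then have \<alpha>: "\<alpha> < d" "a \<alpha> y \<le> z" by simp_all
  have max: "\<And>\<beta>. \<beta> < d \<Longrightarrow> a \<beta> y \<le> z \<Longrightarrow> \<beta> \<le> \<alpha>"
    unfolding \<alpha>_def using Max_ge[OF fin] by blast
  have "z < upper_end a d \<alpha> y"
    using max[of "Suc \<alpha>"] \<alpha> z by (cases "Suc \<alpha> = d") (auto simp: upper_end_def intro: not_le_imp_less)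
  then have "x \<in> elem_J a d \<alpha> y"
    using x \<alpha> unfolding elem_J_def z_def by blast
  with \<alpha> that show ?thesis by blast
qed

lemma elem_idx_eqI:
  assumes "IEM_family a om d P" "y \<in> P" "\<alpha> < d" "x \<in> elem_J a d \<alpha> y"
  shows "elem_idx a d y x = \<alpha>"
  unfolding elem_idx_def using assms elem_J_unique by blast

lemma elem_idx_less:
  assumes "IEM_family a om d P" "y \<in> P" "x \<in> {0..<1}"
  shows "elem_idx a d y x < d"
  using elem_J_exists[OF assms] elem_idx_eqI[OF assms(1,2)] by metis

lemma IEM_family_isCont:
  assumes fam: "IEM_family a om d P" and P: "open P" "y \<in> P" and "\<alpha> < d"
  shows "isCont (a \<alpha>) y" "isCont (om \<alpha>) y" "isCont (upper_end a d \<alpha>) y"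
proof -
  have cont: "isCont (a \<beta>) y" "isCont (om \<beta>) y" if "\<beta> < d" for \<beta>
    using fam that P continuous_on_eq_continuous_at C1_differentiable_imp_continuous_on
    unfolding IEM_family_def by metis+
  show "isCont (a \<alpha>) y" "isCont (om \<alpha>) y" using cont assms by auto
  show "isCont (upper_end a d \<alpha>) y"
  proof (cases "Suc \<alpha> = d")
    case True
    then have "upper_end a d \<alpha> = (\<lambda>y. a 0 y + 1)" by (simp add: upper_end_def fun_eq_iff)
    then show ?thesis using cont[of 0] assms by simp
  next
    case False
    then have "upper_end a d \<alpha> = a (Suc \<alpha>)" by (simp add: upper_end_def fun_eq_iff)
    then show ?thesis using cont[of "Suc \<alpha>"] False assms by simp
  qed
qed

lemma IEM_eventually_translation:
  assumes fam: "IEM_family a om d P" and P: "open P" "y0 \<in> P" and \<alpha>: "\<alpha> < d"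
    and x0: "frac x0 \<in> elem_J_int a d \<alpha> y0"
  shows "\<forall>\<^sub>F p in nhds (x0, y0).
           snd p \<in> P \<and> IEM a om d (snd p) (frac (fst p)) = frac (fst p + om \<alpha> (snd p))"
proof -
  obtain n :: int where n: "a \<alpha> y0 < frac x0 + n" "frac x0 + n < upper_end a d \<alpha> y0"
    using x0 unfolding elem_J_int_def by auto
  define N where "N = n - \<lfloor>x0\<rfloor>"
  have N: "frac x0 + n = x0 + N" unfolding N_def frac_def by simp
  note isCont_endpoints = IEM_family_isCont[OF fam P \<alpha>]
  have "isCont (\<lambda>p. fst p + N - a \<alpha> (snd p)) (x0, y0)"
    using isCont_endpoints by (intro continuous_intros isCont_o2[OF continuous_snd]) auto
  then have "\<forall>\<^sub>F p in nhds (x0, y0). 0 < fst p + N - a \<alpha> (snd p)"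
    using n N by (intro order_tendstoD(1)[OF isCont_tendsto_nhds]) auto
  moreover have "isCont (\<lambda>p. upper_end a d \<alpha> (snd p) - fst p - N) (x0, y0)"
    using isCont_endpoints by (intro continuous_intros isCont_o2[OF continuous_snd]) auto
  then have "\<forall>\<^sub>F p in nhds (x0, y0). 0 < upper_end a d \<alpha> (snd p) - fst p - N"
    using n N by (intro order_tendstoD(1)[OF isCont_tendsto_nhds]) auto
  moreover have "\<forall>\<^sub>F p in nhds (x0, y0). snd p \<in> P"
    using P isCont_tendsto_nhds[where g = snd and p = "(x0, y0)"] by (auto intro: topological_tendstoD)
  ultimately show ?thesis
  proof eventually_elim
    case (elim p)
    moreover have "frac (fst p) + of_int (\<lfloor>fst p\<rfloor> + N) = fst p + N"
      by (simp add: frac_def)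
    ultimately have "frac (fst p) \<in> elem_J a d \<alpha> (snd p)"
      unfolding elem_J_def by (auto simp: frac_lt_1 intro!: exI[of _ "\<lfloor>fst p\<rfloor> + N"])
    then show ?case
      using elim elem_idx_eqI[OF fam _ \<alpha>] by (simp add: IEM_def)
  qed
qed

section \<open>Lifts of the perturbed map\<close>

definition cyl_proj :: "real \<times> real \<Rightarrow> real \<times> real" where
  "cyl_proj p = (frac (fst p), snd p)"

text \<open>The lift of \<open>T\<^sub>\<epsilon>\<close> to the plane, valid where \<open>F\<^sub>y\<close> acts as the translation by \<open>w y\<close>.\<close>

definition lift_step :: "(real \<Rightarrow> real) \<Rightarrow> (real \<Rightarrow> real) \<Rightarrow> real \<Rightarrow> real \<times> real \<Rightarrow> real \<times> real" where
  "lift_step w f \<epsilon> p = (fst p + w (snd p), snd p + \<epsilon> * f (fst p + w (snd p)))"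

primrec lifted_orbit ::
  "(nat \<Rightarrow> real \<Rightarrow> real) \<Rightarrow> (real \<Rightarrow> real) \<Rightarrow> real \<Rightarrow> nat \<Rightarrow> real \<times> real \<Rightarrow> real \<times> real" where
  "lifted_orbit w f \<epsilon> 0 p = p"
| "lifted_orbit w f \<epsilon> (Suc n) p = lift_step (w n) f \<epsilon> (lifted_orbit w f \<epsilon> n p)"

lemma Tmap_0_iterate: "(Tmap a om d f 0 ^^ k) (x, y) = ((IEM a om d y ^^ k) x, y)"
  by (induction k) (auto simp: Tmap_def)

lemma Tmap_cyl_proj:
  assumes "periodic_fun_simple' f" and "IEM a om d (snd p) (frac (fst p)) = frac (fst p + w (snd p))"
  shows "Tmap a om d f \<epsilon> (cyl_proj p) = cyl_proj (lift_step w f \<epsilon> p)"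
  using assms by (simp add: Tmap_def cyl_proj_def lift_step_def periodic_fun_simple'_frac)

lemma Tmap_iterate_lifted_orbit:
  assumes "periodic_fun_simple' f"
    and "\<And>k. k < n \<Longrightarrow> IEM a om d (snd (lifted_orbit w f \<epsilon> k p)) (frac (fst (lifted_orbit w f \<epsilon> k p)))
                        = frac (fst (lifted_orbit w f \<epsilon> k p) + w k (snd (lifted_orbit w f \<epsilon> k p)))"
  shows "(Tmap a om d f \<epsilon> ^^ n) (cyl_proj p) = cyl_proj (lifted_orbit w f \<epsilon> n p)"
  using assms(2) by (induction n) (auto simp: Tmap_cyl_proj[OF assms(1)])

lemma lifted_orbit_0: "lifted_orbit w f 0 n (x, y) = (x + (\<Sum>j<n. w j y), y)"
  by (induction n) (auto simp: lift_step_def)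

lemma snd_lifted_orbit:
  "snd (lifted_orbit w f \<epsilon> n p) = snd p + \<epsilon> * (\<Sum>k<n. f (fst (lifted_orbit w f \<epsilon> (Suc k) p)))"
  by (induction n) (auto simp: lift_step_def algebra_simps)

lemma isCont_lifted_orbit:
  assumes "\<And>k. k < n \<Longrightarrow> isCont (w k) (snd (lifted_orbit w f (snd v0) k (fst v0)))"
    and "continuous_on UNIV f"
  shows "isCont (\<lambda>v. lifted_orbit w f (snd v) n (fst v)) v0"
  using assms(1)
proof (induction n)
  case (Suc n)
  let ?p = "\<lambda>v. lifted_orbit w f (snd v) n (fst v)"
  have p: "isCont ?p v0" using Suc by simp
  have w: "isCont (\<lambda>v. w n (snd (?p v))) v0"
    using isCont_o2[OF continuous_snd[OF p] Suc.prems[of n]] by simp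
  then have x: "isCont (\<lambda>v. fst (?p v) + w n (snd (?p v))) v0"
    using p by (intro continuous_intros)
  have "isCont (\<lambda>v. f (fst (?p v) + w n (snd (?p v)))) v0"
    using assms(2) by (intro isCont_o2[OF x]) (simp add: continuous_on_eq_continuous_at)
  then show ?case
    using x p w unfolding lifted_orbit.simps lift_step_def by (intro continuous_intros)
qed simp

lemma C1_on_lifted_orbit:
  fixes W :: "((real \<times> real) \<times> real) set"
  assumes "\<And>v k. v \<in> W \<Longrightarrow> k < n \<Longrightarrow> snd (lifted_orbit w f (snd v) k (fst v)) \<in> S"
    and "\<And>k. k < n \<Longrightarrow> w k C1_differentiable_on S" and f: "f C1_differentiable_on UNIV"
  shows "C1_on W (\<lambda>v. fst (lifted_orbit w f (snd v) n (fst v)))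
       \<and> C1_on W (\<lambda>v. snd (lifted_orbit w f (snd v) n (fst v)))"
  using assms(1,2)
proof (induction n)
  case 0
  show ?case
    using C1_on_inner[of W "((1, 0), 0)"] C1_on_inner[of W "((0, 1), 0)"] by (simp add: inner_prod_def)
next
  case (Suc n)
  then have fst: "C1_on W (\<lambda>v. fst (lifted_orbit w f (snd v) n (fst v)))"
    and snd: "C1_on W (\<lambda>v. snd (lifted_orbit w f (snd v) n (fst v)))" by auto
  have next_x: "C1_on W (\<lambda>v. fst (lifted_orbit w f (snd v) n (fst v))
                              + w n (snd (lifted_orbit w f (snd v) n (fst v))))"
    using Suc.prems by (intro C1_on_add fst C1_on_compose[OF snd, where S = S]) auto
  have "C1_on W (\<lambda>v. snd v)"
    using C1_on_inner[of W "((0, 0), 1)"] by (simp add: inner_prod_def)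
  then show ?case
    using next_x snd unfolding lifted_orbit.simps lift_step_def
    by (auto intro!: C1_on_add C1_on_mult C1_on_compose[OF _ f])
qed

lemma cyl_nbhd_cyl_proj_ball:
  assumes "r > 0" "ball y0 r \<subseteq> P"
  shows "cyl_nbhd P (x0, y0) (cyl_proj ` ball (x0, y0) r)"
proof -
  have "snd p \<in> P" if "p \<in> ball (x0, y0) r" for p
    using that assms(2) dist_snd_le[of "(x0, y0)" p] by auto
  moreover have "(\<lambda>(x, y). (frac x, y)) = cyl_proj"
    by (auto simp: cyl_proj_def)
  ultimately show ?thesis
    unfolding cyl_nbhd_def using assms(1)
    by (auto simp: cyl_proj_def frac_lt_1 intro!: exI[of _ "ball (x0, y0) r"])
qed

lemma eventually_nhds_cyl_proj_ball:
  fixes Q :: "(real \<times> real) \<times> real \<Rightarrow> bool"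
  assumes P: "open P" "y0 \<in> P" and Q: "\<forall>\<^sub>F v in nhds ((x0, y0), 0). Q v"
  obtains r where "r > 0" "cyl_nbhd P (x0, y0) (cyl_proj ` ball (x0, y0) r)"
    "\<And>p \<epsilon>. p \<in> ball (x0, y0) r \<Longrightarrow> \<bar>\<epsilon>\<bar> < r \<Longrightarrow> Q (p, \<epsilon>)"
proof -
  obtain e where e: "e > 0" "\<And>v. dist v ((x0, y0), 0) < e \<Longrightarrow> Q v"
    using Q unfolding eventually_nhds_metric by blast
  obtain \<rho> where \<rho>: "\<rho> > 0" "ball y0 \<rho> \<subseteq> P"
    using P open_contains_ball by blast
  define r where "r = min (e / 2) \<rho>"
  have "Q (p, \<epsilon>)" if "p \<in> ball (x0, y0) r" "\<bar>\<epsilon>\<bar> < r" for p \<epsilon>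
  proof (rule e(2))
    have "dist (p, \<epsilon>) ((x0, y0), 0) \<le> dist p (x0, y0) + \<bar>\<epsilon>\<bar>"
      using norm_Pair_le[of "p - (x0, y0)" \<epsilon>] by (simp add: dist_norm)
    also have "\<dots> < e"
      using that by (simp add: r_def dist_commute)
    finally show "dist (p, \<epsilon>) ((x0, y0), 0) < e" .
  qed
  moreover have "r > 0" "ball y0 r \<subseteq> P"
    using e \<rho> by (auto simp: r_def)
  ultimately show ?thesis
    using that cyl_nbhd_cyl_proj_ball by blast
qed

section \<open>Perturbation of a periodic orbit\<close>

locale IEM_periodic_orbit = f: periodic_fun_simple' f
  for f :: "real \<Rightarrow> real" +
  fixes a om :: "nat \<Rightarrow> real \<Rightarrow> real" and d q :: nat and P :: "real set" and x0 y0 :: real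
  assumes open_P: "open P" and family: "IEM_family a om d P"
    and f_C1: "f C1_differentiable_on UNIV"
    and y0: "y0 \<in> P" and x0: "x0 \<in> {0..<1}"
    and orbit_periodic: "(IEM a om d y0 ^^ q) x0 = x0"
    and orbit_interior: "\<And>k. k < q \<Longrightarrow> (IEM a om d y0 ^^ k) x0
                     \<in> elem_J_int a d (elem_idx a d y0 ((IEM a om d y0 ^^ k) x0)) y0"
begin

definition orbit :: "nat \<Rightarrow> real" where
  "orbit k = (IEM a om d y0 ^^ k) x0"

definition transl :: "nat \<Rightarrow> real \<Rightarrow> real" where
  "transl k = om (elem_idx a d y0 (orbit k))"

definition lift :: "nat \<Rightarrow> real" where
  "lift k = x0 + (\<Sum>j<k. transl j y0)"

definition winding :: int where
  "winding = \<lfloor>lift q\<rfloor>"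

abbreviation lifted :: "nat \<Rightarrow> (real \<times> real) \<times> real \<Rightarrow> real \<times> real" where
  "lifted k v \<equiv> lifted_orbit transl f (snd v) k (fst v)"

definition x_drift :: "(real \<times> real) \<times> real \<Rightarrow> real" where
  "x_drift v = fst (lifted q v) - fst (fst v) - of_int winding"

definition y_drift :: "(real \<times> real) \<times> real \<Rightarrow> real" where
  "y_drift v = (\<Sum>k<q. f (fst (lifted (Suc k) v)))"

abbreviation v0 :: "(real \<times> real) \<times> real" where
  "v0 \<equiv> ((x0, y0), 0)"

lemma f_has_deriv: "(f has_real_derivative deriv f t) (at t)"
  using f_C1 DERIV_deriv_iff_real_differentiable by (auto simp: C1_differentiable_on_eq)

lemma f_continuous: "continuous_on UNIV f"
  using f_C1 C1_differentiable_imp_continuous_on by blast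

lemma orbit_in_circle: "orbit k \<in> {0..<1}"
  using x0 by (cases k) (auto simp: orbit_def IEM_def frac_lt_1)

lemma orbit_Suc: "orbit (Suc k) = frac (orbit k + transl k y0)"
  by (simp add: orbit_def transl_def IEM_def)

lemma transl_index_less: "elem_idx a d y0 (orbit k) < d"
  using elem_idx_less[OF family y0 orbit_in_circle] .

lemma transl_C1: "transl k C1_differentiable_on P"
  using family transl_index_less unfolding IEM_family_def transl_def by blast

lemma transl_has_deriv: "(transl k has_real_derivative deriv (transl k) y0) (at y0)"
  using transl_C1 open_P y0 DERIV_deriv_iff_real_differentiable
  by (auto simp: C1_differentiable_on_eq)

lemma frac_lift: "frac (lift k) = orbit k"
proof (induction k)
  case 0
  then show ?case using x0 by (simp add: lift_def orbit_def)
next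
  case (Suc k)
  have "lift (Suc k) = lift k + transl k y0" by (simp add: lift_def)
  then show ?case by (simp add: orbit_Suc flip: Suc)
qed

lemma lift_q: "lift q = x0 + of_int winding"
  using frac_lift[of q] orbit_periodic unfolding winding_def frac_def orbit_def by simp

lemma lifted_v0: "lifted_orbit transl f 0 k (x0, y0) = (lift k, y0)"
  by (simp add: lifted_orbit_0 lift_def)

lemma sum_over_orbit:
  fixes h :: "real \<Rightarrow> real"
  assumes "periodic_fun_simple' h"
  shows "(\<Sum>k<q. h (lift (Suc k))) = (\<Sum>k<q. h (orbit k))"
proof -
  have "(\<Sum>k<q. h (lift (Suc k))) = (\<Sum>k<q. h (orbit (Suc k)))"
    by (intro sum.cong refl) (metis periodic_fun_simple'_frac[OF assms] frac_lift)
  also have "\<dots> = (\<Sum>k<q. h (orbit k))"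
  proof -
    have "orbit q = orbit 0" using orbit_periodic by (simp add: orbit_def)
    then have "(\<Sum>k<Suc q. h (orbit k)) = (\<Sum>k<q. h (orbit k)) + h (orbit 0)" by simp
    moreover have "(\<Sum>k<Suc q. h (orbit k)) = h (orbit 0) + (\<Sum>k<q. h (orbit (Suc k)))"
      by (rule sum.lessThan_Suc_shift)
    ultimately show ?thesis by simp
  qed
  finally show ?thesis .
qed

lemma y_drift_v0: "y_drift v0 = (\<Sum>k<q. f (orbit k))"
  using sum_over_orbit[OF f.periodic_fun_simple'_axioms]
  by (simp add: y_drift_def lifted_v0 del: lifted_orbit.simps)

lemma x_drift_v0: "x_drift v0 = 0"
  by (simp add: x_drift_def lifted_v0 lift_q)

lemma isCont_lifted: "isCont (lifted k) v0"
proof (rule isCont_lifted_orbit[OF _ f_continuous])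
  show "isCont (transl j) (snd (lifted j v0))" for j
    using IEM_family_isCont(2)[OF family open_P y0 transl_index_less] by (simp add: lifted_v0 transl_def)
qed

lemma eventually_translation:
  "\<forall>\<^sub>F v in nhds v0. \<forall>k<q. snd (lifted k v) \<in> P \<and>
     IEM a om d (snd (lifted k v)) (frac (fst (lifted k v))) = frac (fst (lifted k v) + transl k (snd (lifted k v)))"
proof -
  have "\<forall>\<^sub>F v in nhds v0. snd (lifted k v) \<in> P \<and>
     IEM a om d (snd (lifted k v)) (frac (fst (lifted k v))) = frac (fst (lifted k v) + transl k (snd (lifted k v)))"
    if "k < q" for k
  proof -
    have "frac (lift k) \<in> elem_J_int a d (elem_idx a d y0 (orbit k)) y0"
      using orbit_interior[OF that] by (simp add: frac_lift orbit_def)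
    from IEM_eventually_translation[OF family open_P y0 transl_index_less this]
    have "\<forall>\<^sub>F p in nhds (lift k, y0).
            snd p \<in> P \<and> IEM a om d (snd p) (frac (fst p)) = frac (fst p + transl k (snd p))"
      by (simp add: transl_def)
    moreover have "filterlim (lifted k) (nhds (lift k, y0)) (nhds v0)"
      using isCont_tendsto_nhds[OF isCont_lifted[of k]] by (simp add: lifted_v0)
    ultimately show ?thesis by (rule eventually_compose_filterlim)
  qed
  then have "\<forall>\<^sub>F v in nhds v0. \<forall>k\<in>{..<q}. snd (lifted k v) \<in> P \<and>
     IEM a om d (snd (lifted k v)) (frac (fst (lifted k v))) = frac (fst (lifted k v) + transl k (snd (lifted k v)))"
    by (intro eventually_ball_finite) auto
  then show ?thesis by (rule eventually_mono) auto
qed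

lemma isCont_x_drift: "isCont x_drift v0"
  unfolding x_drift_def by (intro continuous_intros continuous_fst isCont_lifted)

lemma isCont_y_drift: "isCont y_drift v0"
proof -
  have "isCont (\<lambda>v. f (fst (lifted (Suc k) v))) v0" for k
    using f_continuous by (intro isCont_o2[OF continuous_fst[OF isCont_lifted]])
      (simp add: continuous_on_eq_continuous_at)
  then show ?thesis
    unfolding y_drift_def by (intro continuous_intros)
qed

lemma fixed_point_iff:
  "\<forall>\<^sub>F v in nhds v0. snd v \<noteq> 0 \<longrightarrow>
     ((Tmap a om d f (snd v) ^^ q) (cyl_proj (fst v)) = cyl_proj (fst v) \<longleftrightarrow> x_drift v = 0 \<and> y_drift v = 0)"
  using eventually_translation tendstoD[OF isCont_tendsto_nhds[OF isCont_x_drift] zero_less_one]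
proof eventually_elim
  case (elim v)
  have "(Tmap a om d f (snd v) ^^ q) (cyl_proj (fst v)) = cyl_proj (lifted q v)"
    using elim by (intro Tmap_iterate_lifted_orbit[OF f.periodic_fun_simple'_axioms]) auto
  moreover have "snd (lifted q v) = snd (fst v) + snd v * y_drift v"
    by (simp add: snd_lifted_orbit y_drift_def)
  moreover have "frac (fst (lifted q v)) = frac (fst (fst v)) \<longleftrightarrow> x_drift v = 0"
  proof -
    have "\<bar>x_drift v\<bar> < 1" using elim x_drift_v0 by (simp add: dist_real_def)
    then have "x_drift v \<in> \<int> \<longleftrightarrow> x_drift v = 0"
      using Ints_nonzero_abs_less1[of "x_drift v"] by auto
    moreover have "fst (lifted q v) - fst (fst v) = x_drift v + of_int winding"
      by (simp add: x_drift_def)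
    ultimately show ?thesis
      by (simp add: frac_eq_frac_iff)
  qed
  ultimately show ?case
    by (auto simp: cyl_proj_def prod_eq_iff)
qed

lemma C1_drifts:
  obtains W where "open W" "v0 \<in> W" "C1_on W x_drift" "C1_on W y_drift"
proof -
  obtain W where W: "open W" "v0 \<in> W" "\<And>v k. v \<in> W \<Longrightarrow> k < q \<Longrightarrow> snd (lifted k v) \<in> P"
    using eventually_translation unfolding eventually_nhds by blast
  have lifted_C1: "C1_on W (\<lambda>v. fst (lifted n v))" if "n \<le> q" for n
    using C1_on_lifted_orbit[where S = P, OF _ transl_C1 f_C1] W(3) that by auto
  have "C1_on W (\<lambda>v. fst (fst v))"
    using C1_on_inner[of W "((1, 0), 0)"] by (simp add: inner_prod_def)
  then have "C1_on W x_drift"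
    unfolding x_drift_def by (intro C1_on_diff C1_on_const lifted_C1) auto
  moreover have "C1_on W y_drift"
    unfolding y_drift_def by (intro C1_on_sum C1_on_compose[OF lifted_C1 f_C1]) auto
  ultimately show ?thesis using W that by blast
qed

lemma y_drift_dx:
  "((\<lambda>t. y_drift (v0 + t *\<^sub>R ((1, 0), 0))) has_real_derivative (\<Sum>k<q. deriv f (orbit k))) (at 0)"
proof -
  have "(\<lambda>t. y_drift (v0 + t *\<^sub>R ((1, 0), 0))) = (\<lambda>t. \<Sum>k<q. f (t + lift (Suc k)))"
    by (simp add: y_drift_def lifted_orbit_0 lift_def ac_simps del: lifted_orbit.simps)
  moreover have "((\<lambda>t. \<Sum>k<q. f (t + lift (Suc k))) has_real_derivative (\<Sum>k<q. deriv f (lift (Suc k)))) (at 0)"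
    using f_has_deriv by (intro DERIV_sum) (simp add: DERIV_shift[symmetric])
  ultimately show ?thesis
    using sum_over_orbit[OF periodic_fun_simple'_deriv[OF f.periodic_fun_simple'_axioms]] by simp
qed

lemma x_drift_dx: "((\<lambda>t. x_drift (v0 + t *\<^sub>R ((1, 0), 0))) has_real_derivative 0) (at 0)"
proof -
  have "(\<lambda>t. x_drift (v0 + t *\<^sub>R ((1, 0), 0))) = (\<lambda>t. (\<Sum>j<q. transl j y0) - of_int winding)"
    by (simp add: x_drift_def lifted_orbit_0)
  then show ?thesis by simp
qed

lemma x_drift_dy:
  "((\<lambda>t. x_drift (v0 + t *\<^sub>R ((0, 1), 0))) has_real_derivative (\<Sum>k<q. deriv (transl k) y0)) (at 0)"
proof -
  have "(\<lambda>t. x_drift (v0 + t *\<^sub>R ((0, 1), 0))) = (\<lambda>t. (\<Sum>k<q. transl k (t + y0)) - of_int winding)"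
    by (simp add: x_drift_def lifted_orbit_0 ac_simps)
  moreover have "((\<lambda>t. \<Sum>k<q. transl k (t + y0)) has_real_derivative (\<Sum>k<q. deriv (transl k) y0)) (at 0)"
    using transl_has_deriv by (intro DERIV_sum) (simp add: DERIV_shift[symmetric])
  ultimately show ?thesis
    by (auto intro: derivative_eq_intros)
qed

definition drift_map :: "(real \<times> real) \<times> real \<Rightarrow> (real \<times> real) \<times> real" where
  "drift_map v = ((x_drift v, y_drift v), snd v)"

lemma drift_map_local_homeomorphism:
  assumes M: "(\<Sum>k<q. deriv f (orbit k)) * (\<Sum>k<q. deriv (transl k) y0) \<noteq> 0"
  obtains U V g where "open U" "v0 \<in> U" "open V" "homeomorphism U V drift_map g"
proof -
  obtain W where W: "open W" "v0 \<in> W" "C1_on W x_drift" "C1_on W y_drift"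
    by (rule C1_drifts)
  obtain Dx Dy where
    Dx: "continuous_on W Dx" "\<And>v. v \<in> W \<Longrightarrow> (x_drift has_derivative (\<lambda>h. Dx v \<bullet> h)) (at v)" and
    Dy: "continuous_on W Dy" "\<And>v. v \<in> W \<Longrightarrow> (y_drift has_derivative (\<lambda>h. Dy v \<bullet> h)) (at v)"
    using W(3,4) unfolding C1_on_def by metis
  define L where "L v h = ((Dx v \<bullet> h, Dy v \<bullet> h), snd h)" for v h :: "(real \<times> real) \<times> real"
  have lin: "bounded_linear (L v)" for v
    unfolding L_def by (intro bounded_linear_intros)
  have "(drift_map has_derivative blinfun_apply (Blinfun (L v))) (at v)" if "v \<in> W" for v
    unfolding bounded_linear_Blinfun_apply[OF lin] L_def drift_map_def
    by (intro has_derivative_Pair Dx(2) Dy(2) that has_derivative_snd has_derivative_ident)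
  moreover have "continuous_on W (\<lambda>v. Blinfun (L v))"
    using Dx(1) Dy(1) by (intro continuous_on_Blinfun lin) (auto simp: L_def intro!: continuous_intros)
  moreover have "inj (L v0)"
  proof -
    \<comment> \<open>At \<open>\<epsilon> = 0\<close>, \<open>x_drift\<close> does not depend on \<open>x\<close>, so three partial derivatives decide injectivity.\<close>
    have partials: "Dx v0 \<bullet> ((1, 0), 0) = 0" "Dx v0 \<bullet> ((0, 1), 0) = (\<Sum>k<q. deriv (transl k) y0)"
      "Dy v0 \<bullet> ((1, 0), 0) = (\<Sum>k<q. deriv f (orbit k))"
      using has_derivative_inner_directional[OF Dx(2)[OF W(2)]] x_drift_dx x_drift_dy
        has_derivative_inner_directional[OF Dy(2)[OF W(2)]] y_drift_dx
      by (metis DERIV_unique)+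
    have "h = 0" if "L v0 h = 0" for h
    proof -
      obtain h1 h2 h3 where h: "h = ((h1, h2), h3)" by (metis prod.exhaust)
      have "Dx v0 \<bullet> h = h1 * (Dx v0 \<bullet> ((1, 0), 0)) + h2 * (Dx v0 \<bullet> ((0, 1), 0)) + h3 * (Dx v0 \<bullet> ((0, 0), 1))"
        "Dy v0 \<bullet> h = h1 * (Dy v0 \<bullet> ((1, 0), 0)) + h2 * (Dy v0 \<bullet> ((0, 1), 0)) + h3 * (Dy v0 \<bullet> ((0, 0), 1))"
        unfolding h by (simp_all add: inner_prod_def algebra_simps)
      with that partials M show ?thesis
        by (auto simp: L_def h zero_prod_def)
    qed
    then show ?thesis
      using linear_injective_0[OF bounded_linear.linear[OF lin]] by blast
  qed
  ultimately show ?thesis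
    using inverse_function_theorem_inj[OF W(1) _ _ W(2)] that
    by (metis bounded_linear_Blinfun_apply lin)
qed

lemma drift_zero_set_graph:
  assumes f_sum: "(\<Sum>k<q. f (orbit k)) = 0"
    and M: "(\<Sum>k<q. deriv f (orbit k)) * (\<Sum>k<q. deriv (transl k) y0) \<noteq> 0"
  obtains U \<epsilon>1 X where "open U" "v0 \<in> U" "\<epsilon>1 > 0" "continuous_on {-\<epsilon>1<..<\<epsilon>1} X" "X 0 = (x0, y0)"
    "\<And>v. v \<in> U \<Longrightarrow> \<bar>snd v\<bar> < \<epsilon>1 \<Longrightarrow> x_drift v = 0 \<and> y_drift v = 0 \<longleftrightarrow> fst v = X (snd v)"
proof -
  obtain U V g where U: "open U" "v0 \<in> U" and V: "open V" and hom: "homeomorphism U V drift_map g"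
    using drift_map_local_homeomorphism[OF M] by blast
  have g_drift: "\<And>v. v \<in> U \<Longrightarrow> g (drift_map v) = v" and drift_g: "\<And>z. z \<in> V \<Longrightarrow> drift_map (g z) = z"
    and gV: "g ` V = U" and drift_U: "drift_map ` U = V" and g_cont: "continuous_on V g"
    using hom unfolding homeomorphism_def by auto
  have "drift_map v0 = ((0, 0), 0)"
    using x_drift_v0 y_drift_v0 f_sum by (simp add: drift_map_def)
  then have "((0, 0), 0) \<in> V" "g ((0, 0), 0) = v0"
    using drift_U g_drift U(2) by force+
  obtain \<epsilon>1 where "\<epsilon>1 > 0" "ball ((0, 0), 0) \<epsilon>1 \<subseteq> V"
    using V \<open>((0, 0), 0) \<in> V\<close> open_contains_ball by blast
  then have \<epsilon>1: "\<epsilon>1 > 0" "\<And>\<epsilon>. \<bar>\<epsilon>\<bar> < \<epsilon>1 \<Longrightarrow> ((0, 0), \<epsilon>) \<in> V"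
    by (auto simp: subset_iff dist_Pair_Pair dist_real_def)
  define X where "X \<epsilon> = fst (g ((0, 0), \<epsilon>))" for \<epsilon>
  have branch: "g ((0, 0), \<epsilon>) = (X \<epsilon>, \<epsilon>)" "(X \<epsilon>, \<epsilon>) \<in> U" if "\<bar>\<epsilon>\<bar> < \<epsilon>1" for \<epsilon>
  proof -
    have "snd (g ((0, 0), \<epsilon>)) = \<epsilon>"
      using drift_g[OF \<epsilon>1(2)[OF that]] by (simp add: drift_map_def prod_eq_iff)
    then show "g ((0, 0), \<epsilon>) = (X \<epsilon>, \<epsilon>)" by (simp add: X_def prod_eq_iff)
    then show "(X \<epsilon>, \<epsilon>) \<in> U" using gV \<epsilon>1(2)[OF that] by force
  qed
  show ?thesis
  proof
    show "continuous_on {-\<epsilon>1<..<\<epsilon>1} X"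
      unfolding X_def using \<epsilon>1(2)
      by (intro continuous_intros continuous_on_compose2[OF g_cont]) auto
    show "X 0 = (x0, y0)" by (simp add: X_def \<open>g ((0, 0), 0) = v0\<close>)
    show "x_drift v = 0 \<and> y_drift v = 0 \<longleftrightarrow> fst v = X (snd v)" if "v \<in> U" "\<bar>snd v\<bar> < \<epsilon>1" for v
    proof -
      have "x_drift v = 0 \<and> y_drift v = 0 \<longleftrightarrow> drift_map v = ((0, 0), snd v)"
        by (simp add: drift_map_def)
      also have "\<dots> \<longleftrightarrow> v = g ((0, 0), snd v)"
        using g_drift[OF that(1)] drift_g[OF \<epsilon>1(2)[OF that(2)]] by metis
      also have "\<dots> \<longleftrightarrow> fst v = X (snd v)"
        using branch(1)[OF that(2)] by (auto simp: prod_eq_iff)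
      finally show ?thesis .
    qed
  qed (use U \<epsilon>1 in auto)
qed

lemma no_fixed_points:
  assumes "(\<Sum>k<q. f (orbit k)) \<noteq> 0"
  shows "\<exists>\<epsilon>0>0. \<exists>U. cyl_nbhd P (x0, y0) U \<and>
           (\<forall>\<epsilon>. 0 < \<bar>\<epsilon>\<bar> \<and> \<bar>\<epsilon>\<bar> < \<epsilon>0 \<longrightarrow> (\<forall>p\<in>U. (Tmap a om d f \<epsilon> ^^ q) p \<noteq> p))"
proof -
  have "\<forall>\<^sub>F v in nhds v0. y_drift v \<noteq> 0"
    using assms y_drift_v0 by (intro tendsto_imp_eventually_ne[OF isCont_tendsto_nhds[OF isCont_y_drift]]) auto
  then have "\<forall>\<^sub>F v in nhds v0. snd v \<noteq> 0 \<longrightarrow> (Tmap a om d f (snd v) ^^ q) (cyl_proj (fst v)) \<noteq> cyl_proj (fst v)"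
    using fixed_point_iff by eventually_elim auto
  then obtain r where r: "r > 0" "cyl_nbhd P (x0, y0) (cyl_proj ` ball (x0, y0) r)"
    and nofix: "\<And>p \<epsilon>. p \<in> ball (x0, y0) r \<Longrightarrow> \<bar>\<epsilon>\<bar> < r \<Longrightarrow> \<epsilon> \<noteq> 0 \<Longrightarrow> (Tmap a om d f \<epsilon> ^^ q) (cyl_proj p) \<noteq> cyl_proj p"
    by (rule eventually_nhds_cyl_proj_ball[OF open_P y0]) auto
  show ?thesis
    using r nofix by (intro exI[of _ r] conjI exI[of _ "cyl_proj ` ball (x0, y0) r"]) auto
qed

lemma fixed_point_continuation:
  assumes "(\<Sum>k<q. f (orbit k)) = 0"
    and "(\<Sum>k<q. deriv f (orbit k)) * (\<Sum>k<q. deriv (transl k) y0) \<noteq> 0"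
  shows "\<exists>\<epsilon>0>0. \<exists>U. cyl_nbhd P (x0, y0) U \<and>
           (\<exists>X. continuous_on {\<epsilon>. 0 < \<bar>\<epsilon>\<bar> \<and> \<bar>\<epsilon>\<bar> < \<epsilon>0} X \<and> (X \<longlongrightarrow> (x0, y0)) (at 0) \<and>
              (\<forall>\<epsilon>. 0 < \<bar>\<epsilon>\<bar> \<and> \<bar>\<epsilon>\<bar> < \<epsilon>0 \<longrightarrow>
                 cyl_proj (X \<epsilon>) \<in> U \<and> (Tmap a om d f \<epsilon> ^^ q) (cyl_proj (X \<epsilon>)) = cyl_proj (X \<epsilon>) \<and>
                 (\<forall>p\<in>U. (Tmap a om d f \<epsilon> ^^ q) p = p \<longrightarrow> p = cyl_proj (X \<epsilon>))))"
proof -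
  obtain W \<epsilon>1 X where W: "open W" "v0 \<in> W" and "\<epsilon>1 > 0"
    and X: "continuous_on {-\<epsilon>1<..<\<epsilon>1} X" "X 0 = (x0, y0)"
    and graph: "\<And>v. v \<in> W \<Longrightarrow> \<bar>snd v\<bar> < \<epsilon>1 \<Longrightarrow> x_drift v = 0 \<and> y_drift v = 0 \<longleftrightarrow> fst v = X (snd v)"
    by (rule drift_zero_set_graph[OF assms]) auto
  have "\<forall>\<^sub>F v in nhds v0. v \<in> W \<and> (snd v \<noteq> 0 \<longrightarrow>
          ((Tmap a om d f (snd v) ^^ q) (cyl_proj (fst v)) = cyl_proj (fst v) \<longleftrightarrow> x_drift v = 0 \<and> y_drift v = 0))"
    using eventually_nhds_in_open[OF W] fixed_point_iff by (rule eventually_conj)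
  then obtain r where r: "r > 0" "cyl_nbhd P (x0, y0) (cyl_proj ` ball (x0, y0) r)"
    and near: "\<And>p \<epsilon>. p \<in> ball (x0, y0) r \<Longrightarrow> \<bar>\<epsilon>\<bar> < r \<Longrightarrow> \<epsilon> \<noteq> 0 \<Longrightarrow> (p, \<epsilon>) \<in> W \<and>
          ((Tmap a om d f \<epsilon> ^^ q) (cyl_proj p) = cyl_proj p \<longleftrightarrow> x_drift (p, \<epsilon>) = 0 \<and> y_drift (p, \<epsilon>) = 0)"
    by (rule eventually_nhds_cyl_proj_ball[OF open_P y0]) auto
  have "isCont X 0"
    using X(1) \<open>\<epsilon>1 > 0\<close> by (simp add: continuous_on_eq_continuous_at)
  then obtain \<epsilon>2 where "\<epsilon>2 > 0" "\<And>\<epsilon>. \<bar>\<epsilon>\<bar> < \<epsilon>2 \<Longrightarrow> X \<epsilon> \<in> ball (x0, y0) r"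
    using tendstoD[OF isCont_tendsto_nhds[OF \<open>isCont X 0\<close>] r(1)] X(2)
    unfolding eventually_nhds_metric by (auto simp: dist_real_def dist_commute)
  define \<epsilon>0 where "\<epsilon>0 = min \<epsilon>1 (min \<epsilon>2 r)"
  have on_branch: "X \<epsilon> \<in> ball (x0, y0) r \<and> (Tmap a om d f \<epsilon> ^^ q) (cyl_proj (X \<epsilon>)) = cyl_proj (X \<epsilon>)"
    if \<epsilon>: "0 < \<bar>\<epsilon>\<bar>" "\<bar>\<epsilon>\<bar> < \<epsilon>0" for \<epsilon>
  proof
    show X\<epsilon>: "X \<epsilon> \<in> ball (x0, y0) r"
      using \<epsilon> \<open>\<And>\<epsilon>. \<bar>\<epsilon>\<bar> < \<epsilon>2 \<Longrightarrow> X \<epsilon> \<in> ball (x0, y0) r\<close> by (simp add: \<epsilon>0_def)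
    show "(Tmap a om d f \<epsilon> ^^ q) (cyl_proj (X \<epsilon>)) = cyl_proj (X \<epsilon>)"
      using near[OF X\<epsilon>] graph[of "(X \<epsilon>, \<epsilon>)"] \<epsilon> by (auto simp: \<epsilon>0_def)
  qed
  have unique: "p = cyl_proj (X \<epsilon>)"
    if \<epsilon>: "0 < \<bar>\<epsilon>\<bar>" "\<bar>\<epsilon>\<bar> < \<epsilon>0" and p: "p \<in> cyl_proj ` ball (x0, y0) r" "(Tmap a om d f \<epsilon> ^^ q) p = p"
    for \<epsilon> p
  proof -
    obtain p' where p': "p' \<in> ball (x0, y0) r" "p = cyl_proj p'" using p(1) by blast
    then have "p' = X \<epsilon>"
      using near[OF p'(1)] graph[of "(p', \<epsilon>)"] \<epsilon> p(2) by (auto simp: \<epsilon>0_def)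
    then show ?thesis using p'(2) by simp
  qed
  show ?thesis
  proof (intro exI conjI allI impI)
    show "\<epsilon>0 > 0" using \<open>\<epsilon>1 > 0\<close> \<open>\<epsilon>2 > 0\<close> r(1) by (simp add: \<epsilon>0_def)
    show "continuous_on {\<epsilon>. 0 < \<bar>\<epsilon>\<bar> \<and> \<bar>\<epsilon>\<bar> < \<epsilon>0} X"
      by (rule continuous_on_subset[OF X(1)]) (auto simp: \<epsilon>0_def)
    show "(X \<longlongrightarrow> (x0, y0)) (at 0)"
      using \<open>isCont X 0\<close> X(2) by (simp add: isCont_def)
    fix \<epsilon> assume "0 < \<bar>\<epsilon>\<bar> \<and> \<bar>\<epsilon>\<bar> < \<epsilon>0"
    then show "cyl_proj (X \<epsilon>) \<in> cyl_proj ` ball (x0, y0) r"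
      and "(Tmap a om d f \<epsilon> ^^ q) (cyl_proj (X \<epsilon>)) = cyl_proj (X \<epsilon>)"
      and "\<forall>p\<in>cyl_proj ` ball (x0, y0) r. (Tmap a om d f \<epsilon> ^^ q) p = p \<longrightarrow> p = cyl_proj (X \<epsilon>)"
      using on_branch unique by auto
  qed (fact r(2))
qed

end

theorem mainTheorem15:
  fixes a om :: "nat \<Rightarrow> real \<Rightarrow> real" and d q :: nat and P :: "real set"
    and f :: "real \<Rightarrow> real" and x0 y0 :: real
  assumes P: "open P" "is_interval P" "P \<noteq> {}"
    and fam: "IEM_family a om d P"
    and f_smooth: "smooth_fun f"
    and f_per: "\<forall>x. f (x + 1) = f x"
    and q: "q \<ge> 1"
    and y0: "y0 \<in> P"
    and x0: "x0 \<in> {0..<1}"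
    and per: "((Tmap a om d f 0) ^^ q) (x0, y0) = (x0, y0)"
    and int: "\<forall>k<q. (IEM a om d y0 ^^ k) x0
                \<in> elem_J_int a d (elem_idx a d y0 ((IEM a om d y0 ^^ k) x0)) y0"
  shows
   "((\<Sum>k<q. f ((IEM a om d y0 ^^ k) x0)) = 0 \<and>
     (\<Sum>k<q. deriv f ((IEM a om d y0 ^^ k) x0)) *
     (\<Sum>k<q. deriv (om (elem_idx a d y0 ((IEM a om d y0 ^^ k) x0))) y0) \<noteq> 0
     \<longrightarrow>
     (\<exists>\<epsilon>0>0. \<exists>U. cyl_nbhd P (x0, y0) U \<and>
        (\<exists>X :: real \<Rightarrow> real \<times> real.
           continuous_on {\<epsilon>. 0 < \<bar>\<epsilon>\<bar> \<and> \<bar>\<epsilon>\<bar> < \<epsilon>0} X \<and>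
           (X \<longlongrightarrow> (x0, y0)) (at 0) \<and>
           (\<forall>\<epsilon>. 0 < \<bar>\<epsilon>\<bar> \<and> \<bar>\<epsilon>\<bar> < \<epsilon>0 \<longrightarrow>
              (frac (fst (X \<epsilon>)), snd (X \<epsilon>)) \<in> U \<and>
              ((Tmap a om d f \<epsilon>) ^^ q) (frac (fst (X \<epsilon>)), snd (X \<epsilon>))
                 = (frac (fst (X \<epsilon>)), snd (X \<epsilon>)) \<and>
              (\<forall>p\<in>U. ((Tmap a om d f \<epsilon>) ^^ q) p = p \<longrightarrow>
                       p = (frac (fst (X \<epsilon>)), snd (X \<epsilon>)))))))
    \<and>
    ((\<Sum>k<q. f ((IEM a om d y0 ^^ k) x0)) \<noteq> 0
     \<longrightarrow>
     (\<exists>\<epsilon>0>0. \<exists>U. cyl_nbhd P (x0, y0) U \<and>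
        (\<forall>\<epsilon>. 0 < \<bar>\<epsilon>\<bar> \<and> \<bar>\<epsilon>\<bar> < \<epsilon>0 \<longrightarrow>
           (\<forall>p\<in>U. ((Tmap a om d f \<epsilon>) ^^ q) p \<noteq> p))))"
proof -
  have "(IEM a om d y0 ^^ q) x0 = x0"
    using per by (simp add: Tmap_0_iterate)
  then interpret IEM_periodic_orbit f a om d q P x0 y0
    using P(1) fam smooth_fun_imp_C1_differentiable[OF f_smooth] f_per y0 x0 int
    by unfold_locales auto
  show ?thesis
    using fixed_point_continuation no_fixed_points unfolding orbit_def transl_def cyl_proj_def
    by blast
qed

end
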